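(* Let $f\in\mathbb{K}_C[[\underline{x}]][y]$ be a free polynomial of degree $n$ with characteristic exponents $m_1<\dots<m_h$, and let $r_0^1,\dots,r_0^e,r_1,\dots,r_h$ and $e_1,\dots,e_h$ be as in the context. Let $\underline{\alpha}=(\alpha_0^1,\dots,\alpha_0^e,\alpha_1,\dots,\alpha_h)$ and $\underline{\beta}=(\beta_0^1,\dots,\beta_0^e,\beta_1,\dots,\beta_h)$ be elements of $\mathbb{Z}^e\times\mathbb{N}^h$ with $0\le\alpha_i,\beta_i<e_i$ for all $i\in\{1,\dots,h\}$. If $\sum_{i=1}^e\alpha_0^ir_0^i+\sum_{j=1}^h\alpha_jr_j=\sum_{i=1}^e\beta_0^ir_0^i+\sum_{j=1}^h\beta_jr_j$, then $\underline{\alpha}=\underline{\beta}$.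
   Context: $\mathbb{K}$ is an algebraically closed field of characteristic $0$, $\underline{x}=(x_1,\dots,x_e)$. $C\subseteq\mathbb{R}^e$ is a line free cone (nonnegative real combinations of finitely many vectors of $\mathbb{Q}^e$, with $v\in C\setminus\{0\}\Rightarrow -v\notin C$). $\mathbb{K}_C[[\underline{x}]]$ is the ring of formal series with exponents in $C\cap\mathbb{Z}^e$; $\mathbb{K}_C[[\underline{x}^{1/N}]]$ the ring of series $\sum a_p\underline{x}^{p/N}$, $p\in\mathbb{Z}^e$, $p/N\in C$. Fix a total additive order $\le$ on $\mathbb{Z}^e$ compatible with $C$, extended to $\mathbb{Q}^e$ by clearing denominators; $O(z)$ is the $\le$-least exponent of a nonzero series $z$. A monic $g\in\mathbb{K}_C[[\underline{x}]][y]$ of degree $N$ is free if irreducible in $\mathbb{K}_C[[\underline{x}]][y]$ with a root in $\mathbb{K}_C[[\underline{x}^{1/N}]]$. The roots $y_1,\dots,y_n$ of $f$ lie in $\mathbb{K}_C[[\underline{x}^{1/n}]]$; characteristic exponents are the $m\in\mathbb{Z}^e$ with $m/n=O(y_i-y_j)$ for some $y_i\ne y_j$. Sequences: $D_1=n^e$, $D_{i+1}$ the gcd of the $e\times e$ minors of $(nI_e,m_1^T,\dots,m_i^T)$ ($1\le i\le h$); $e_i=D_i/D_{i+1}$; $r_0^k=n\varepsilon_k$ where $\varepsilon_1,\dots,\varepsilon_e$ is the standard basis of $\mathbb{Z}^e$; $r_1=m_1$, $r_i=e_{i-1}r_{i-1}+m_i-m_{i-1}$ ($2\le i\le h$). 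*)

theory Defs
  imports "HOL-Analysis.Analysis" "HOL-Computational_Algebra.Polynomial"
begin

text \<open>A cone is given by a finite set V of generators with rational coordinates in R^e;
 C = nonnegative real combinations of V.\<close>

definition in_cone :: "(real^'e::finite) set \<Rightarrow> real^'e \<Rightarrow> bool" where
  "in_cone V x \<longleftrightarrow> (\<exists>c. (\<forall>v\<in>V. c v \<ge> 0) \<and> x = (\<Sum>v\<in>V. c v *\<^sub>R v))"

definition rational_cone :: "(real^'e::finite) set \<Rightarrow> bool" where
  "rational_cone V \<longleftrightarrow> finite V \<and> (\<forall>v\<in>V. \<forall>i. v $ i \<in> \<rat>)"

definition line_free :: "(real^'e::finite) set \<Rightarrow> bool" where
  "line_free V \<longleftrightarrow> (\<forall>v. in_cone V v \<and> v \<noteq> 0 \<longrightarrow> \<not> in_cone V (- v))"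

definition realvec :: "nat \<Rightarrow> int^'e \<Rightarrow> real^'e" where
  "realvec N p = (\<chi> i. real_of_int (p $ i) / real N)"

text \<open>A series  sum a_p x^(p/N)  is represented by its coefficient function a on Z^e
 (the denominator N being fixed by the ring under consideration).\<close>

type_synonym ('k,'e) ser = "int^'e \<Rightarrow> 'k"

text \<open>membership in K_C[[x^(1/N)]]\<close>
definition ser_in :: "(real^'e::finite) set \<Rightarrow> nat \<Rightarrow> ('k::zero,'e::finite) ser \<Rightarrow> bool" where
  "ser_in V N a \<longleftrightarrow> (\<forall>p. a p \<noteq> 0 \<longrightarrow> in_cone V (realvec N p))"

definition ser_zero :: "('k::zero,'e::finite) ser" where
  "ser_zero = (\<lambda>p. 0)"

definition ser_one :: "('k::{zero,one},'e::finite) ser" where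
  "ser_one = (\<lambda>p. if p = 0 then 1 else 0)"

definition ser_mult :: "('k::comm_ring_1,'e::finite) ser \<Rightarrow> ('k,'e) ser \<Rightarrow> ('k,'e) ser" where
  "ser_mult a b = (\<lambda>p. \<Sum>(q,r)\<in>{(q,r). q + r = p \<and> a q \<noteq> 0 \<and> b r \<noteq> 0}. a q * b r)"

definition ser_pow :: "('k::comm_ring_1,'e::finite) ser \<Rightarrow> nat \<Rightarrow> ('k,'e) ser" where
  "ser_pow z k = ((ser_mult z) ^^ k) ser_one"

text \<open>embedding K_C[[x]] into K_C[[x^(1/N)]]: x^p = x^((N p)/N)\<close>
definition ser_embed :: "nat \<Rightarrow> ('k::zero,'e::finite) ser \<Rightarrow> ('k,'e) ser" where
  "ser_embed N a = (\<lambda>p. if (\<forall>i. int N dvd p $ i) then a (\<chi> i. p $ i div int N) else 0)"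

text \<open>a polynomial is its coefficient sequence (coefficient of y^k)\<close>
type_synonym ('k,'e) spoly = "nat \<Rightarrow> ('k,'e) ser"

definition spoly_in :: "(real^'e::finite) set \<Rightarrow> ('k::zero,'e::finite) spoly \<Rightarrow> bool" where
  "spoly_in V P \<longleftrightarrow> (\<forall>k. ser_in V 1 (P k)) \<and> finite {k. P k \<noteq> ser_zero}"

definition spoly_zero :: "('k::zero,'e::finite) spoly" where
  "spoly_zero = (\<lambda>k. ser_zero)"

definition spoly_one :: "('k::{zero,one},'e::finite) spoly" where
  "spoly_one = (\<lambda>k. if k = 0 then ser_one else ser_zero)"

definition spoly_mult :: "('k::comm_ring_1,'e::finite) spoly \<Rightarrow> ('k,'e) spoly \<Rightarrow> ('k,'e) spoly" where
  "spoly_mult P Q = (\<lambda>k p. \<Sum>i\<le>k. ser_mult (P i) (Q (k - i)) p)"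

definition spoly_unit :: "(real^'e::finite) set \<Rightarrow> ('k::comm_ring_1,'e::finite) spoly \<Rightarrow> bool" where
  "spoly_unit V P \<longleftrightarrow> (\<exists>Q. spoly_in V Q \<and> spoly_mult P Q = spoly_one)"

definition spoly_irreducible :: "(real^'e::finite) set \<Rightarrow> ('k::comm_ring_1,'e::finite) spoly \<Rightarrow> bool" where
  "spoly_irreducible V f \<longleftrightarrow> spoly_in V f \<and> f \<noteq> spoly_zero \<and> \<not> spoly_unit V f \<and>
     (\<forall>g h. spoly_in V g \<and> spoly_in V h \<and> f = spoly_mult g h \<longrightarrow> spoly_unit V g \<or> spoly_unit V h)"

definition spoly_monic :: "nat \<Rightarrow> ('k::{zero,one},'e::finite) spoly \<Rightarrow> bool" where
  "spoly_monic N f \<longleftrightarrow> f N = ser_one \<and> (\<forall>k>N. f k = ser_zero)"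

text \<open>value f(z) for z in K_C[[x^(1/N)]], f of degree at most d\<close>
definition spoly_eval :: "nat \<Rightarrow> nat \<Rightarrow> ('k::comm_ring_1,'e::finite) spoly \<Rightarrow> ('k,'e) ser \<Rightarrow> ('k,'e) ser" where
  "spoly_eval N d f z = (\<lambda>p. \<Sum>k\<le>d. ser_mult (ser_embed N (f k)) (ser_pow z k) p)"

definition free_poly :: "(real^'e::finite) set \<Rightarrow> nat \<Rightarrow> ('k::comm_ring_1,'e::finite) spoly \<Rightarrow> bool" where
  "free_poly V N f \<longleftrightarrow> spoly_monic N f \<and> spoly_irreducible V f \<and>
     (\<exists>z. ser_in V N z \<and> spoly_eval N N f z = ser_zero)"

definition roots_of :: "(real^'e::finite) set \<Rightarrow> nat \<Rightarrow> ('k::comm_ring_1,'e::finite) spoly \<Rightarrow> ('k,'e) ser set" where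
  "roots_of V n f = {z. ser_in V n z \<and> spoly_eval n n f z = ser_zero}"

definition additive_total_order :: "(int^'e::finite \<Rightarrow> int^'e \<Rightarrow> bool) \<Rightarrow> bool" where
  "additive_total_order le \<longleftrightarrow> (\<forall>a. le a a) \<and> (\<forall>a b. le a b \<and> le b a \<longrightarrow> a = b) \<and>
     (\<forall>a b c. le a b \<and> le b c \<longrightarrow> le a c) \<and> (\<forall>a b. le a b \<or> le b a) \<and>
     (\<forall>a b c. le a b \<longrightarrow> le (a + c) (b + c))"

definition compatible_order :: "(real^'e::finite) set \<Rightarrow> (int^'e::finite \<Rightarrow> int^'e \<Rightarrow> bool) \<Rightarrow> bool" where
  "compatible_order V le \<longleftrightarrow> (\<forall>p. in_cone V (realvec 1 p) \<longrightarrow> le 0 p)"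

definition is_least_wrt :: "(int^'e::finite \<Rightarrow> int^'e \<Rightarrow> bool) \<Rightarrow> (int^'e) set \<Rightarrow> int^'e \<Rightarrow> bool" where
  "is_least_wrt le S p \<longleftrightarrow> p \<in> S \<and> (\<forall>q\<in>S. le p q)"

text \<open>characteristic exponents: m with m/n = O(y_i - y_j). For a series in K_C[[x^(1/n)]] written
 as sum a_p x^(p/n), O = p0/n where p0 is the le-least p with a_p \<noteq> 0 (clearing denominators),
 so m = p0.\<close>
definition char_exps :: "(real^'e::finite) set \<Rightarrow> (int^'e::finite \<Rightarrow> int^'e \<Rightarrow> bool) \<Rightarrow> nat \<Rightarrow> ('k::comm_ring_1,'e::finite) spoly \<Rightarrow> (int^'e) set" where
  "char_exps V le n f = {m. \<exists>y y'. y \<in> roots_of V n f \<and> y' \<in> roots_of V n f \<and> y \<noteq> y' \<and>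
       is_least_wrt le {p. y p - y' p \<noteq> 0} m}"

text \<open>columns of the e x (e+i) matrix (n I_e, m_1^T, ..., m_i^T)\<close>
definition colv :: "nat \<Rightarrow> (nat \<Rightarrow> int^'e::finite) \<Rightarrow> 'e + nat \<Rightarrow> int^'e" where
  "colv n m c = (case c of Inl k \<Rightarrow> int n *s axis k 1 | Inr j \<Rightarrow> m j)"

text \<open>the set of e x e minors of (n I_e, m_1^T, ..., m_i^T): choose e distinct columns\<close>
definition minors :: "nat \<Rightarrow> (nat \<Rightarrow> int^'e::finite) \<Rightarrow> nat \<Rightarrow> int set" where
  "minors n m i = {det (\<chi> r c. colv n m (\<sigma> c) $ r :: int^'e^'e) | \<sigma>.
       inj \<sigma> \<and> range \<sigma> \<subseteq> range Inl \<union> Inr ` {1..i}}"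

definition Dseq :: "nat \<Rightarrow> (nat \<Rightarrow> int^'e::finite) \<Rightarrow> nat \<Rightarrow> int" where
  "Dseq n m i = (if i \<le> 1 then int n ^ CARD('e) else Gcd (minors n m (i - 1)))"

definition eseq :: "nat \<Rightarrow> (nat \<Rightarrow> int^'e::finite) \<Rightarrow> nat \<Rightarrow> int" where
  "eseq n m i = Dseq n m i div Dseq n m (Suc i)"

fun rseq :: "nat \<Rightarrow> (nat \<Rightarrow> int^'e::finite) \<Rightarrow> nat \<Rightarrow> int^'e" where
  "rseq n m 0 = 0"
| "rseq n m (Suc 0) = m 1"
| "rseq n m (Suc (Suc i)) = eseq n m (Suc i) *s rseq n m (Suc i) + m (Suc (Suc i)) - m (Suc i)"

definition r0 :: "nat \<Rightarrow> 'e::finite \<Rightarrow> int^'e" where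
  "r0 n k = int n *s axis k 1"

definition alg_closed_type :: "'k::field itself \<Rightarrow> bool" where
  "alg_closed_type _ \<longleftrightarrow> (\<forall>p::'k poly. degree p \<ge> 1 \<longrightarrow> (\<exists>x. poly p x = 0))"

end

theory Submission imports Defs begin

text \<open>
  Let \<open>L\<^sub>i\<close> be the lattice spanned by the columns of \<open>(n I\<^sub>e, m\<^sub>1, \<dots>, m\<^sub>i)\<close>; thus \<open>D\<^sub>i\<^sub>+\<^sub>1\<close> is
  the gcd of the maximal minors of these generators. By multilinearity, \<open>D\<^sub>j\<close> still divides a
  determinant whose rows are generators of \<open>L\<^sub>j\<^sub>-\<^sub>1\<close> except for one row lying anywhere in \<open>L\<^sub>j\<^sub>-\<^sub>1\<close>.
  So if \<open>K m\<^sub>j \<in> L\<^sub>j\<^sub>-\<^sub>1\<close>, then \<open>K\<close> times any maximal minor of the generators of \<open>L\<^sub>j\<close> is divisible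
  by \<open>D\<^sub>j\<close>, i.e. \<open>D\<^sub>j\<close> divides \<open>K D\<^sub>j\<^sub>+\<^sub>1\<close>, and \<open>e\<^sub>j \<le> |K|\<close> for \<open>K \<noteq> 0\<close>. Now \<open>r\<^sub>j \<equiv> m\<^sub>j\<close> modulo
  \<open>L\<^sub>j\<^sub>-\<^sub>1\<close> and \<open>r\<^sub>1, \<dots>, r\<^sub>j\<^sub>-\<^sub>1, n \<epsilon>\<^sub>k \<in> L\<^sub>j\<^sub>-\<^sub>1\<close>; subtracting the two expansions, the largest \<open>j\<close>
  with \<open>\<alpha>\<^sub>j \<noteq> \<beta>\<^sub>j\<close> would give \<open>e\<^sub>j \<le> |\<alpha>\<^sub>j - \<beta>\<^sub>j| < e\<^sub>j\<close>. What remains is \<open>n \<alpha>\<^sub>0 = n \<beta>\<^sub>0\<close>,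
  and \<open>n > 0\<close> because a monic polynomial of degree 0 is a unit.
\<close>

(* The library's vec.span needs a field of scalars; lattices in int^'e need the span over int. *)
interpretation vec_module: module "(*s) :: 'a::comm_ring_1 \<Rightarrow> 'a^'n::finite \<Rightarrow> 'a^'n"
  by unfold_locales (vector algebra_simps)+

lemma dvd_det_if_row_in_span:
  fixes A :: "'a::comm_ring_1^'n::finite^'n"
  assumes dvd_det: "\<And>B. (\<And>i. B $ i \<in> S) \<Longrightarrow> d dvd det B"
    and rows: "\<And>i. i \<noteq> k \<Longrightarrow> A $ i \<in> S"
    and row_k: "A $ k \<in> vec_module.span S"
  shows "d dvd det A"
proof -
  have "d dvd det (\<chi> i. if i = k then x else A $ i)" if "x \<in> vec_module.span S" for x
    using that
  proof (induction x rule: vec_module.span_induct_alt)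
    case base
    show ?case by (simp add: det_row_0)
  next
    case (step c x y)
    have "d dvd det (\<chi> i. if i = k then x else A $ i)"
      using step.hyps(1) rows by (intro dvd_det) auto
    then show ?case
      using step.IH by (simp add: det_row_add det_row_mul)
  qed
  moreover have "A = (\<chi> i. if i = k then A $ k else A $ i)"
    by (simp add: vec_eq_iff)
  ultimately show ?thesis
    using row_k by metis
qed

lemma det_scale_rows:
  "det (\<chi> i. c *s b i :: 'a::comm_ring_1^'n::finite^'n) = c ^ CARD('n) * det (\<chi> i. b i :: 'a^'n^'n)"
  unfolding det_def by (simp add: prod.distrib sum_distrib_left mult.left_commute)

definition column_labels :: "nat \<Rightarrow> ('e + nat) set" where
  "column_labels i = range Inl \<union> Inr ` {1..i}"

definition column_set :: "nat \<Rightarrow> (nat \<Rightarrow> int^'e::finite) \<Rightarrow> nat \<Rightarrow> (int^'e) set" where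
  "column_set n m i = colv n m ` column_labels i"

definition column_lattice :: "nat \<Rightarrow> (nat \<Rightarrow> int^'e::finite) \<Rightarrow> nat \<Rightarrow> (int^'e) set" where
  "column_lattice n m i = vec_module.span (column_set n m i)"

lemma r0_in_column_set: "r0 n k \<in> column_set n m i"
proof -
  have "colv n m (Inl k) \<in> column_set n m i"
    by (simp add: column_set_def column_labels_def)
  then show ?thesis
    by (simp add: colv_def r0_def)
qed

lemma m_in_column_set: "j \<in> {1..i} \<Longrightarrow> m j \<in> column_set n m i"
  using imageI[of "Inr j" "column_labels i" "colv n m"]
  by (simp add: column_set_def column_labels_def colv_def)

lemma column_lattice_mono: "i \<le> i' \<Longrightarrow> column_lattice n m i \<subseteq> column_lattice n m i'"
  unfolding column_lattice_def column_set_def column_labels_def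
  by (intro vec_module.span_mono image_mono) auto

lemma m_in_column_lattice: "j \<in> {1..i} \<Longrightarrow> m j \<in> column_lattice n m i"
  unfolding column_lattice_def by (intro vec_module.span_base m_in_column_set)

lemma column_lattice_Suc_if_diff_m:
  assumes "x - m (Suc i) \<in> column_lattice n m i"
  shows "x \<in> column_lattice n m (Suc i)"
proof -
  have "x - m (Suc i) \<in> column_lattice n m (Suc i)"
    using assms column_lattice_mono[of i "Suc i"] by auto
  moreover have "m (Suc i) \<in> column_lattice n m (Suc i)"
    by (simp add: m_in_column_lattice)
  ultimately have "(x - m (Suc i)) + m (Suc i) \<in> column_lattice n m (Suc i)"
    unfolding column_lattice_def by (rule vec_module.span_add)
  then show ?thesis
    by simp
qed

lemma rseq_minus_m_in_column_lattice:
  "rseq n m (Suc i) - m (Suc i) \<in> column_lattice n m i"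
proof (induction i)
  case 0
  show ?case by (simp add: column_lattice_def vec_module.span_zero)
next
  case (Suc i)
  have "eseq n m (Suc i) *s rseq n m (Suc i) - m (Suc i) \<in> column_lattice n m (Suc i)"
    using column_lattice_Suc_if_diff_m[OF Suc.IH] m_in_column_lattice[of "Suc i" "Suc i"]
    unfolding column_lattice_def by (intro vec_module.span_diff vec_module.span_scale) auto
  then show ?case
    by simp
qed

lemma rseq_in_column_lattice: "rseq n m i \<in> column_lattice n m i"
proof (cases i)
  case 0
  then show ?thesis by (simp add: column_lattice_def vec_module.span_zero)
next
  case (Suc i')
  then show ?thesis
    using column_lattice_Suc_if_diff_m[OF rseq_minus_m_in_column_lattice[of n m i']] by simp
qed

lemma Dseq_nonneg: "0 \<le> Dseq n m j"
  by (simp add: Dseq_def)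

lemma minors_eq_det_rows:
  "minors n m i = {det (\<chi> c. colv n m (\<sigma> c) :: int^'e::finite^'e) | \<sigma>.
     inj \<sigma> \<and> range \<sigma> \<subseteq> column_labels i}"
proof -
  have "(\<chi> r c. colv n m (\<sigma> c) $ r :: int^'e^'e) = transpose (\<chi> c. colv n m (\<sigma> c))" for \<sigma>
    by (simp add: transpose_def)
  then show ?thesis
    by (simp add: minors_def column_labels_def)
qed

lemma Dseq_dvd_det:
  fixes A :: "int^'e::finite^'e"
  assumes j: "1 \<le> j" and rows: "\<And>c. A $ c \<in> column_set n m (j - 1)"
  shows "Dseq n m j dvd det A"
proof -
  obtain \<sigma> where \<sigma>: "\<And>c. \<sigma> c \<in> column_labels (j - 1)" and A: "A = (\<chi> c. colv n m (\<sigma> c))"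
  proof -
    have "\<forall>c. \<exists>l \<in> column_labels (j - 1). A $ c = colv n m l"
      using rows by (auto simp: column_set_def)
    then obtain \<sigma> where "\<And>c. \<sigma> c \<in> column_labels (j - 1) \<and> A $ c = colv n m (\<sigma> c)"
      by metis
    then show thesis
      by (intro that) (auto simp: vec_eq_iff)
  qed
  show ?thesis
  proof (cases "inj \<sigma>")
    case False
    then obtain a b where "a \<noteq> b" and "\<sigma> a = \<sigma> b"
      unfolding inj_def by blast
    then have "det A = 0"
      unfolding A by (intro det_identical_rows[of a b]) (simp_all add: row_def)
    then show ?thesis
      by simp
  next
    case inj: True
    show ?thesis
    proof (cases "j = 1")
      case True
      then have "\<forall>c. \<exists>k. \<sigma> c = Inl k"
        using \<sigma> by (auto simp: column_labels_def)
      then obtain g where "\<And>c. \<sigma> c = Inl (g c)"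
        by metis
      then have "det A = int n ^ CARD('e) * det (\<chi> c. axis (g c) 1 :: int^'e^'e)"
        unfolding A by (simp add: colv_def det_scale_rows)
      then show ?thesis
        using True by (simp add: Dseq_def)
    next
      case False
      have "det A \<in> minors n m (j - 1)"
        unfolding minors_eq_det_rows A using inj \<sigma> by blast
      then show ?thesis
        using False j by (simp add: Dseq_def Gcd_dvd)
    qed
  qed
qed

lemma column_labels_pred:
  "l \<in> column_labels j \<Longrightarrow> l \<noteq> Inr j \<Longrightarrow> l \<in> column_labels (j - 1)"
  by (cases l) (auto simp: column_labels_def inj_image_mem_iff)

lemma Dseq_dvd_mult_Dseq_Suc:
  fixes m :: "nat \<Rightarrow> int^'e::finite"
  assumes j: "1 \<le> j" and K: "K *s m j \<in> column_lattice n m (j - 1)"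
  shows "Dseq n m j dvd K * Dseq n m (Suc j)"
proof -
  have "Dseq n m j dvd K * det (\<chi> c. colv n m (\<sigma> c) :: int^'e^'e)"
    if \<sigma>: "inj \<sigma>" "range \<sigma> \<subseteq> column_labels j" for \<sigma>
  proof (cases "Inr j \<in> range \<sigma>")
    case False
    have "\<sigma> c \<in> column_labels (j - 1)" for c
      using False \<sigma>(2) by (metis column_labels_pred rangeI subsetD)
    then have "Dseq n m j dvd det (\<chi> c. colv n m (\<sigma> c) :: int^'e^'e)"
      by (intro Dseq_dvd_det[OF j]) (simp add: column_set_def)
    then show ?thesis
      by simp
  next
    case True
    then obtain k where k: "\<sigma> k = Inr j"
      by auto
    have other_rows: "\<sigma> c \<in> column_labels (j - 1)" if "c \<noteq> k" for c
      using \<sigma> k that by (metis column_labels_pred injD rangeI subsetD)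
    have "(\<chi> c. colv n m (\<sigma> c)) = (\<chi> c. if c = k then m j else colv n m (\<sigma> c))"
      by (simp add: vec_eq_iff k colv_def)
    then have "K * det (\<chi> c. colv n m (\<sigma> c) :: int^'e^'e)
        = det (\<chi> c. if c = k then K *s m j else colv n m (\<sigma> c) :: int^'e^'e)"
      by (simp add: det_row_mul)
    also have "Dseq n m j dvd \<dots>"
    proof (rule dvd_det_if_row_in_span[where S = "column_set n m (j - 1)" and k = k])
      show "Dseq n m j dvd det B" if "\<And>c. B $ c \<in> column_set n m (j - 1)" for B
        using Dseq_dvd_det[OF j] that .
      show "(\<chi> c. if c = k then K *s m j else colv n m (\<sigma> c)) $ c \<in> column_set n m (j - 1)"
        if "c \<noteq> k" for c
        using other_rows that by (simp add: column_set_def)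
      show "(\<chi> c. if c = k then K *s m j else colv n m (\<sigma> c)) $ k
          \<in> vec_module.span (column_set n m (j - 1))"
        using K by (simp add: column_lattice_def)
    qed
    finally show ?thesis .
  qed
  then have "Dseq n m j dvd Gcd ((*) K ` minors n m j)"
    by (intro Gcd_greatest) (auto simp: minors_eq_det_rows)
  then show ?thesis
    using j by (simp add: Gcd_mult Dseq_def)
qed

lemma eseq_le_if_multiple_in_column_lattice:
  fixes m :: "nat \<Rightarrow> int^'e::finite"
  assumes K: "K \<noteq> 0" "K *s m (Suc i) \<in> column_lattice n m i"
  shows "eseq n m (Suc i) \<le> \<bar>K\<bar>"
proof (cases "Dseq n m (Suc (Suc i)) = 0")
  case True
  then show ?thesis
    by (simp add: eseq_def)
next
  case False
  then have D: "0 < Dseq n m (Suc (Suc i))"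
    using Dseq_nonneg[of n m "Suc (Suc i)"] by simp
  have "Dseq n m (Suc i) dvd K * Dseq n m (Suc (Suc i))"
    using Dseq_dvd_mult_Dseq_Suc[of "Suc i"] K by simp
  then have "\<bar>Dseq n m (Suc i)\<bar> \<le> \<bar>K * Dseq n m (Suc (Suc i))\<bar>"
    using K(1) D by (intro dvd_imp_le_int) auto
  then have "Dseq n m (Suc i) \<le> \<bar>K\<bar> * Dseq n m (Suc (Suc i))"
    using D by (simp add: abs_mult Dseq_nonneg)
  then have "Dseq n m (Suc i) div Dseq n m (Suc (Suc i))
      \<le> \<bar>K\<bar> * Dseq n m (Suc (Suc i)) div Dseq n m (Suc (Suc i))"
    using D by (intro zdiv_mono1) auto
  then show ?thesis
    using D by (simp add: eseq_def)
qed

lemma smult_rseq_in_column_lattice_iff: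
  "K *s rseq n m (Suc i) \<in> column_lattice n m i \<longleftrightarrow> K *s m (Suc i) \<in> column_lattice n m i"
proof -
  have split: "K *s rseq n m (Suc i) = K *s (rseq n m (Suc i) - m (Suc i)) + K *s m (Suc i)"
    by (simp add: vec_eq_iff algebra_simps)
  have "K *s (rseq n m (Suc i) - m (Suc i)) \<in> column_lattice n m i"
    using rseq_minus_m_in_column_lattice unfolding column_lattice_def
    by (rule vec_module.span_scale)
  then show ?thesis
    unfolding split column_lattice_def by (rule vec_module.span_add_eq)
qed

lemma rseq_combination_coeffs_eq_0:
  fixes \<delta> :: "nat \<Rightarrow> int"
  assumes x: "x \<in> column_lattice n m 0"
  shows "\<forall>j\<in>{1..h}. \<bar>\<delta> j\<bar> < eseq n m j \<Longrightarrow> x + (\<Sum>j=1..h. \<delta> j *s rseq n m j) = 0 \<Longrightarrow>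
    \<forall>j\<in>{1..h}. \<delta> j = 0"
proof (induction h)
  case 0
  then show ?case by simp
next
  case (Suc h)
  have "(x + (\<Sum>j=1..h. \<delta> j *s rseq n m j)) + \<delta> (Suc h) *s rseq n m (Suc h) = 0"
    using Suc.prems(2) by (simp add: add.assoc)
  then have "\<delta> (Suc h) *s rseq n m (Suc h) = - (x + (\<Sum>j=1..h. \<delta> j *s rseq n m j))"
    by (rule add_eq_0_iff[THEN iffD1])
  also have "\<dots> \<in> column_lattice n m h"
  proof -
    have "x \<in> column_lattice n m h"
      using x column_lattice_mono[of 0 h n m] by blast
    moreover have "rseq n m j \<in> column_lattice n m h" if "j \<le> h" for j
      using rseq_in_column_lattice[of n m j] column_lattice_mono[OF that] by blast
    ultimately show ?thesis
      unfolding column_lattice_def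
      by (intro vec_module.span_neg vec_module.span_add vec_module.span_sum vec_module.span_scale) auto
  qed
  finally have "\<delta> (Suc h) *s m (Suc h) \<in> column_lattice n m h"
    by (simp add: smult_rseq_in_column_lattice_iff)
  then have top: "\<delta> (Suc h) = 0"
  proof (rule contrapos_pp)
    assume "\<delta> (Suc h) \<noteq> 0"
    then show "\<delta> (Suc h) *s m (Suc h) \<notin> column_lattice n m h"
      using eseq_le_if_multiple_in_column_lattice[of "\<delta> (Suc h)" m h n] Suc.prems(1) by force
  qed
  have "\<forall>j\<in>{1..h}. \<bar>\<delta> j\<bar> < eseq n m j"
    using Suc.prems(1) by simp
  moreover have "x + (\<Sum>j=1..h. \<delta> j *s rseq n m j) = 0"
    using Suc.prems(2) top by simp
  ultimately have "\<forall>j\<in>{1..h}. \<delta> j = 0"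
    by (rule Suc.IH)
  with top show ?case
    by (metis atLeastAtMost_iff le_Suc_eq)
qed

lemma sum_r0_eq: "(\<Sum>k\<in>UNIV. \<gamma> $ k *s r0 n k) = int n *s \<gamma>"
proof -
  have "(\<Sum>k\<in>UNIV. \<gamma> $ k *s r0 n k) = int n *s (\<Sum>k\<in>UNIV. \<gamma> $ k *s axis k 1)"
    by (simp add: r0_def vec_module.scale_sum_right mult.commute)
  then show ?thesis
    by (simp add: basis_expansion)
qed

lemma smult_n_in_column_lattice: "int n *s \<gamma> \<in> column_lattice n m i"
  unfolding sum_r0_eq[symmetric] column_lattice_def
  by (intro vec_module.span_sum vec_module.span_scale vec_module.span_base r0_in_column_set)

lemma ser_mult_zero_left: "ser_mult ser_zero b = ser_zero"
  by (simp add: ser_mult_def ser_zero_def fun_eq_iff)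

lemma ser_mult_one_left: "ser_mult ser_one b = (b :: ('k::comm_ring_1, 'e::finite) ser)"
proof
  fix p
  have "{(q, r). q + r = p \<and> (ser_one q :: 'k) \<noteq> 0 \<and> b r \<noteq> 0}
      = (if (1::'k) \<noteq> 0 \<and> b p \<noteq> 0 then {(0, p)} else {})"
    by (auto simp: ser_one_def split: if_splits)
  moreover have "b p = 0" if "(1::'k) = 0"
    by (metis mult_1 mult_zero_left that)
  ultimately show "ser_mult ser_one b p = b p"
    by (auto simp: ser_mult_def ser_one_def)
qed

lemma spoly_mult_one_left: "spoly_mult spoly_one Q = (Q :: ('k::comm_ring_1, 'e::finite) spoly)"
proof (intro ext)
  fix k p
  have "ser_mult (spoly_one i) (Q (k - i)) p = (if i = 0 then Q k p else 0)" for i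
    by (simp add: spoly_one_def ser_mult_one_left ser_mult_zero_left) (simp add: ser_zero_def)
  then show "spoly_mult spoly_one Q k p = Q k p"
    by (simp add: spoly_mult_def)
qed

lemma spoly_in_one: "spoly_in V (spoly_one :: ('k::{zero,one}, 'e::finite) spoly)"
proof -
  have "in_cone V (realvec 1 0)"
    unfolding in_cone_def by (rule exI[of _ "\<lambda>_. 0"]) (simp add: realvec_def vec_eq_iff)
  then have "ser_in V 1 (spoly_one k :: ('k, 'e) ser)" for k
    by (auto simp: ser_in_def spoly_one_def ser_one_def ser_zero_def)
  moreover have "{k. (spoly_one :: ('k, 'e) spoly) k \<noteq> ser_zero} \<subseteq> {0}"
    by (auto simp: spoly_one_def)
  ultimately show ?thesis
    unfolding spoly_in_def by (meson finite.emptyI finite_insert finite_subset)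
qed

lemma spoly_unit_one: "spoly_unit V (spoly_one :: ('k::comm_ring_1, 'e::finite) spoly)"
  unfolding spoly_unit_def using spoly_in_one spoly_mult_one_left by blast

lemma free_poly_degree_pos:
  assumes "free_poly V n (f :: ('k::comm_ring_1, 'e::finite) spoly)"
  shows "0 < n"
proof (rule ccontr)
  assume "\<not> 0 < n"
  then have "f = spoly_one"
    using assms by (auto simp: free_poly_def spoly_monic_def spoly_one_def fun_eq_iff)
  then show False
    using assms spoly_unit_one unfolding free_poly_def spoly_irreducible_def by blast
qed

theorem mainTheorem12:
  fixes V :: "(real^'e::finite) set"
    and le :: "int^'e \<Rightarrow> int^'e \<Rightarrow> bool"
    and f :: "('k::field_char_0,'e) spoly"
    and n h :: nat
    and m :: "nat \<Rightarrow> int^'e"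
    and \<alpha>0 \<beta>0 :: "int^'e"
    and \<alpha> \<beta> :: "nat \<Rightarrow> nat"
  assumes "alg_closed_type TYPE('k)"
    and "rational_cone V" and "line_free V"
    and "additive_total_order le" and "compatible_order V le"
    and "free_poly V n f"
    and "char_exps V le n f = m ` {1..h}"
    and "\<forall>i. 1 \<le> i \<and> i < h \<longrightarrow> le (m i) (m (Suc i)) \<and> m i \<noteq> m (Suc i)"
    and "\<forall>i\<in>{1..h}. int (\<alpha> i) < eseq n m i \<and> int (\<beta> i) < eseq n m i"
    and "(\<Sum>k\<in>UNIV. \<alpha>0 $ k *s r0 n k) + (\<Sum>j=1..h. int (\<alpha> j) *s rseq n m j)
       = (\<Sum>k\<in>UNIV. \<beta>0 $ k *s r0 n k) + (\<Sum>j=1..h. int (\<beta> j) *s rseq n m j)"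
  shows "\<alpha>0 = \<beta>0 \<and> (\<forall>j\<in>{1..h}. \<alpha> j = \<beta> j)"
proof -
  define \<delta> where "\<delta> j = int (\<alpha> j) - int (\<beta> j)" for j
  have eq: "int n *s \<alpha>0 + (\<Sum>j=1..h. int (\<alpha> j) *s rseq n m j)
      = int n *s \<beta>0 + (\<Sum>j=1..h. int (\<beta> j) *s rseq n m j)"
    using assms(10) by (simp add: sum_r0_eq)
  then have "int n *s (\<alpha>0 - \<beta>0) + (\<Sum>j=1..h. \<delta> j *s rseq n m j) = 0"
    by (simp add: \<delta>_def vector_sub_rdistrib vector_ssub_ldistrib sum_subtractf algebra_simps)
  moreover have "\<forall>j\<in>{1..h}. \<bar>\<delta> j\<bar> < eseq n m j"
    using assms(9) by (auto simp: \<delta>_def)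
  ultimately have "\<forall>j\<in>{1..h}. \<delta> j = 0"
    using rseq_combination_coeffs_eq_0[OF smult_n_in_column_lattice] by blast
  then have coeffs: "\<forall>j\<in>{1..h}. \<alpha> j = \<beta> j"
    by (simp add: \<delta>_def)
  then have "(\<Sum>j=1..h. int (\<alpha> j) *s rseq n m j) = (\<Sum>j=1..h. int (\<beta> j) *s rseq n m j)"
    by (intro sum.cong) auto
  then have "int n *s \<alpha>0 = int n *s \<beta>0"
    using eq by simp
  then have "\<alpha>0 = \<beta>0"
    using free_poly_degree_pos[OF assms(6)] by (simp add: vec_eq_iff)
  with coeffs show ?thesis
    by blast
qed

end
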